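(* Let $\mathscr{D}_n^B$ be the set of type $B_n$ derangements, and suppose the flag major index satisfies $$\sum_{\pi\in\mathscr{D}_n^B}q^{\mathrm{fmaj}(\pi)}=\sum_{0\le k\le n}(-1)^k q^{k(k-1)}[2n]_q[2n-2]_q\cdots[2k+2]_q$$ (empty product for $k=n$ equal to $1$). Then for every $m\ge 2$ and every $0\le r\le m-1$, $$\lim_{n\to\infty}\frac{\left|\{\pi\in\mathscr{D}_n^B:\ \mathrm{fmaj}(\pi)\equiv r\pmod m\}\right|}{|\mathscr{D}_n^B|}=\frac1m ,$$ i.e. the flag major index over $B_n$-derangements has the balanced property.
   Context: $[t]_q=1+q+\cdots+q^{t-1}$. A type $B_n$ permutation is a signed permutation $\pi$ of $[n]$ (a bijection $\pi$ of $\{\pm1,\dots,\pm n\}$ with $\pi(-i)=-\pi(i)$); a type $B_n$ derangement is one with $\pi(i)\ne i$ for all $1\le i\le n$. The flag major index is $\mathrm{fmaj}(\pi)=2\,\mathrm{maj}(\pi)+\mathrm{neg}(\pi)$ (Adin–Roichman), with $\mathrm{neg}(\pi)$ the number of negative entries; its generating function over $\mathscr{D}_n^B$ is the displayed formula. A statistic $\xi$ on sets $Q_n$ has the balanced property if for every $m\ge 2$ and every $0\le r\le m-1$, $\lim_{n\to\infty}|\{\pi\in Q_n:\xi(\pi)\equiv r \pmod m\}|/|Q_n| = 1/m$. *)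

theory Defs
  imports "HOL-Analysis.Analysis"
begin

text \<open>Signed permutations of [n], as functions on int, extended by the identity
outside {+-1,...,+-n}.\<close>

definition signed_domain :: "nat \<Rightarrow> int set" where
  "signed_domain n = {i. i \<noteq> 0 \<and> \<bar>i\<bar> \<le> int n}"

definition signed_perms :: "nat \<Rightarrow> (int \<Rightarrow> int) set" where
  "signed_perms n = {\<pi>. bij_betw \<pi> (signed_domain n) (signed_domain n)
      \<and> (\<forall>i \<in> signed_domain n. \<pi> (- i) = - \<pi> i)
      \<and> (\<forall>i. i \<notin> signed_domain n \<longrightarrow> \<pi> i = i)}"

definition B_derangements :: "nat \<Rightarrow> (int \<Rightarrow> int) set" where
  "B_derangements n = {\<pi> \<in> signed_perms n. \<forall>i::int. 1 \<le> i \<and> i \<le> int n \<longrightarrow> \<pi> i \<noteq> i}"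

text \<open>Major index w.r.t. the usual order on integers, number of negative entries,
and flag major index (Adin--Roichman).\<close>

definition maj_B :: "nat \<Rightarrow> (int \<Rightarrow> int) \<Rightarrow> nat" where
  "maj_B n \<pi> = (\<Sum>i \<in> {i. 1 \<le> i \<and> i < n \<and> \<pi> (int i) > \<pi> (int i + 1)}. i)"

definition neg_B :: "nat \<Rightarrow> (int \<Rightarrow> int) \<Rightarrow> nat" where
  "neg_B n \<pi> = card {i::nat. 1 \<le> i \<and> i \<le> n \<and> \<pi> (int i) < 0}"

definition fmaj :: "nat \<Rightarrow> (int \<Rightarrow> int) \<Rightarrow> nat" where
  "fmaj n \<pi> = 2 * maj_B n \<pi> + neg_B n \<pi>"

definition qint :: "nat \<Rightarrow> 'a::comm_ring_1 \<Rightarrow> 'a" where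
  "qint t q = (\<Sum>i<t. q ^ i)"

end

theory Submission
  imports Defs
begin

(* Write G_n(q) for the right-hand side of the assumed generating
   function identity, so that G_n(q) = sum over D_n^B of q^fmaj.
   (1) Roots-of-unity filter: for any finite set S and statistic f with values in
       nat, m * #{x in S. f x = r mod m} = sum_{j<m} w^(j(m-r)) * sum_{x in S} (w^j)^(f x),
       where w = exp(2 pi i/m).  Hence a statistic is equidistributed mod m in the
       limit as soon as the generating function at every nontrivial m-th root of
       unity is negligible against the cardinality (lemma balanced_if_roots_negligible).
   (2) G satisfies G_(n+1)(q) = [2n+2]_q G_n(q) + (-1)^(n+1) q^(n(n+1)).  At q = 1 this
       gives G_n(1) >= n!, while at a root of unity z <> 1 all [t]_z are bounded by
       C = 2/|z-1|, so |G_n(z)| <= (C+1)^n.  Since (C+1)^n/n! -> 0, G_n(z)/G_n(1) -> 0.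
   The main theorem combines (1) and (2), using the identity at q = 1 to identify
   |D_n^B| with G_n(1). *)

definition unity_root :: "nat \<Rightarrow> complex" where
  "unity_root m = exp (2 * of_real pi * \<i> / of_nat m)"

lemma unity_root_power:
  "unity_root m ^ t = exp (2 * of_real pi * \<i> * of_nat t / of_nat m)"
  unfolding unity_root_def by (subst exp_of_nat_mult[symmetric]) (simp add: field_simps)

lemma norm_unity_root_power: "norm (unity_root m ^ t) = 1"
  unfolding unity_root_def by (simp add: norm_power norm_exp_eq_Re)

lemma unity_root_power_eq_1_iff:
  assumes "m \<ge> 1"
  shows "unity_root m ^ t = 1 \<longleftrightarrow> m dvd t"
  unfolding unity_root_power using complex_root_unity_eq_1[OF assms] by simp

lemma sum_unity_root_powers:
  assumes "m \<ge> 1"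
  shows "(\<Sum>j<m. unity_root m ^ (j * t)) = (if m dvd t then of_nat m else 0)"
proof (cases "m dvd t")
  case True
  then have "unity_root m ^ t = 1"
    using unity_root_power_eq_1_iff[OF assms] by simp
  then have "unity_root m ^ (j * t) = 1" for j
    by (simp add: power_mult mult.commute[of j])
  with True show ?thesis by simp
next
  case False
  define z where "z = unity_root m ^ t"
  have "z \<noteq> 1" using False unity_root_power_eq_1_iff[OF assms] by (simp add: z_def)
  have "z ^ m = 1"
    unfolding z_def power_mult[symmetric] using unity_root_power_eq_1_iff[OF assms] by simp
  have "(\<Sum>j<m. unity_root m ^ (j * t)) = (\<Sum>j<m. z ^ j)"
    unfolding z_def by (simp add: power_mult[symmetric] mult.commute)
  also have "\<dots> = (z ^ m - 1) / (z - 1)"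
    using \<open>z \<noteq> 1\<close> by (rule geometric_sum)
  finally show ?thesis using \<open>z ^ m = 1\<close> False by simp
qed

lemma dvd_shift_iff_mod_eq:
  fixes m r t :: nat
  assumes "r < m"
  shows "m dvd (t + (m - r)) \<longleftrightarrow> t mod m = r"
  using assms
  by (metis (no_types, lifting) Nat.add_diff_assoc diff_add_zero diff_is_0_eq dvd_minus_mod
      le_diff_conv mod_add_self2 mod_nat_eqI nat_less_le)

lemma roots_of_unity_filter:
  fixes S :: "'a set" and f :: "'a \<Rightarrow> nat"
  assumes "finite S" "r < m"
  shows "of_nat m * of_nat (card {x \<in> S. f x mod m = r})
       = (\<Sum>j<m. unity_root m ^ (j * (m - r)) * (\<Sum>x\<in>S. (unity_root m ^ j) ^ f x))"
proof -
  have "m \<ge> 1" using assms(2) by simp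
  have "(\<Sum>j<m. unity_root m ^ (j * (m - r)) * (\<Sum>x\<in>S. (unity_root m ^ j) ^ f x))
      = (\<Sum>x\<in>S. \<Sum>j<m. unity_root m ^ (j * (f x + (m - r))))"
    unfolding sum_distrib_left power_mult[symmetric] power_add[symmetric]
    by (subst sum.swap) (simp add: add_mult_distrib2 add.commute)
  also have "\<dots> = (\<Sum>x\<in>S. if f x mod m = r then of_nat m else 0)"
    using sum_unity_root_powers[OF \<open>m \<ge> 1\<close>] dvd_shift_iff_mod_eq[OF assms(2)] by simp
  also have "\<dots> = of_nat m * of_nat (card {x \<in> S. f x mod m = r})"
    by (simp add: sum.If_cases[OF assms(1)] Int_def conj_commute)
  finally show ?thesis by simp
qed

lemma balanced_if_roots_negligible:
  fixes S :: "nat \<Rightarrow> 'a set" and f :: "nat \<Rightarrow> 'a \<Rightarrow> nat"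
  assumes fin: "\<And>n. finite (S n)" and ne: "\<And>n. S n \<noteq> {}" and "r < m"
    and negl: "\<And>j. 1 \<le> j \<Longrightarrow> j < m \<Longrightarrow>
      (\<lambda>n. (\<Sum>x\<in>S n. (unity_root m ^ j) ^ f n x) / of_nat (card (S n))) \<longlonglongrightarrow> 0"
  shows "(\<lambda>n. real (card {x \<in> S n. f n x mod m = r}) / real (card (S n))) \<longlonglongrightarrow> 1 / real m"
proof -
  define w where "w = unity_root m"
  define J where "J = {1..<m}"
  define E where "E n = (\<Sum>j\<in>J. w ^ (j * (m - r)) *
                          ((\<Sum>x\<in>S n. (w ^ j) ^ f n x) / of_nat (card (S n))))" for n
  have "m \<noteq> 0" using \<open>r < m\<close> by simp
  have ratio: "complex_of_real (real (card {x \<in> S n. f n x mod m = r}) / real (card (S n)))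
             = (1 + E n) / of_nat m" for n
  proof -
    have c: "of_nat (card (S n)) \<noteq> (0::complex)" using fin ne by simp
    have "(\<Sum>j<m. w ^ (j * (m - r)) * (\<Sum>x\<in>S n. (w ^ j) ^ f n x))
        = of_nat (card (S n)) + (\<Sum>j\<in>J. w ^ (j * (m - r)) * (\<Sum>x\<in>S n. (w ^ j) ^ f n x))"
      unfolding J_def lessThan_atLeast0 using \<open>m \<noteq> 0\<close>
      by (subst sum.atLeast_Suc_lessThan) auto
    also have "\<dots> = of_nat (card (S n)) * (1 + E n)"
      using c by (simp add: E_def sum_divide_distrib[symmetric] field_simps)
    finally show ?thesis
      using roots_of_unity_filter[OF fin \<open>r < m\<close>, where f="f n"] c \<open>m \<noteq> 0\<close>
      by (simp add: w_def field_simps)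
  qed
  have "E \<longlonglongrightarrow> (\<Sum>j\<in>J. w ^ (j * (m - r)) * 0)"
    unfolding E_def J_def w_def by (intro tendsto_intros negl) auto
  then have "(\<lambda>n. (1 + E n) / of_nat m) \<longlonglongrightarrow> (1 + 0) / of_nat m"
    by (intro tendsto_intros) (use \<open>m \<noteq> 0\<close> in simp_all)
  then have "(\<lambda>n. (1 + E n) / of_nat m) \<longlonglongrightarrow> complex_of_real (1 / real m)"
    by simp
  then show ?thesis
    unfolding ratio[symmetric] tendsto_of_real_iff .
qed

definition fmaj_derangement_poly :: "nat \<Rightarrow> 'a::comm_ring_1 \<Rightarrow> 'a" where
  "fmaj_derangement_poly n q =
     (\<Sum>k = 0..n. (-1) ^ k * q ^ (k * (k - 1)) * (\<Prod>j = k + 1..n. qint (2 * j) q))"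

abbreviation G :: "nat \<Rightarrow> 'a::comm_ring_1 \<Rightarrow> 'a" where
  "G \<equiv> fmaj_derangement_poly"

lemma G_0 [simp]: "G 0 q = 1"
  by (simp add: fmaj_derangement_poly_def)

text \<open>The recursion \<open>G\<^sub>n\<^sub>+\<^sub>1(q) = [2n+2]\<^sub>q G\<^sub>n(q) + (-1)\<^sup>n\<^sup>+\<^sup>1 q\<^sup>n\<^sup>(\<^sup>n\<^sup>+\<^sup>1\<^sup>)\<close>: all summands
  with \<open>k \<le> n\<close> acquire the new factor \<open>[2n+2]\<^sub>q\<close>, and \<open>k = n+1\<close> contributes the sign term.\<close>

lemma G_Suc: "G (Suc n) q = qint (2 * Suc n) q * G n q + (-1) ^ Suc n * q ^ (Suc n * n)"
proof -
  have "G (Suc n) q = (\<Sum>k = 0..n. qint (2 * Suc n) q *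
          ((-1) ^ k * q ^ (k * (k - 1)) * (\<Prod>j = k + 1..n. qint (2 * j) q)))
        + (-1) ^ Suc n * q ^ (Suc n * n)"
    unfolding fmaj_derangement_poly_def
    by (simp add: prod.nat_ivl_Suc' mult_ac)
  then show ?thesis
    by (simp add: fmaj_derangement_poly_def sum_distrib_left)
qed

lemma G_of_real: "G n (of_real x :: complex) = of_real (G n x)"
  by (simp add: fmaj_derangement_poly_def qint_def)

text \<open>At \<open>q = 1\<close> the recursion reads \<open>G\<^sub>n\<^sub>+\<^sub>1 = 2(n+1)G\<^sub>n \<plusminus> 1\<close>, so \<open>G\<^sub>n(1)\<close> grows at
  least like \<open>n!\<close>.\<close>

lemma G_one_ge_fact: "G n (1::real) \<ge> fact n"
proof (induction n)
  case 0
  then show ?case by simp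
next
  case (Suc n)
  have "(real n + 1) * G n (1::real) \<ge> (real n + 1) * fact n"
    using Suc.IH by (intro mult_left_mono) auto
  then have "(real n + 1) * G n (1::real) \<ge> fact (Suc n)"
    by (simp add: algebra_simps)
  moreover have "fact (Suc n) \<ge> (1::real)"
    by (rule fact_ge_1)
  moreover have "(-1::real) ^ Suc n \<ge> -1"
    by (cases "even n") auto
  moreover have "G (Suc n) (1::real) = 2 * ((real n + 1) * G n 1) + (-1) ^ Suc n"
    by (simp add: G_Suc qint_def)
  ultimately show ?case
    by (simp add: algebra_simps)
qed

lemma qint_bound:
  fixes z :: complex
  assumes "z \<noteq> 1" "norm z = 1"
  shows "norm (qint t z) \<le> 2 / norm (z - 1)"
proof -
  have "qint t z = (z ^ t - 1) / (z - 1)"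
    unfolding qint_def using assms by (simp add: geometric_sum)
  moreover have "norm (z ^ t - 1) \<le> 2"
    using norm_triangle_ineq4[of "z ^ t" 1] assms by (simp add: norm_power)
  ultimately show ?thesis
    using assms by (simp add: norm_divide divide_right_mono)
qed

lemma G_bound:
  fixes z :: complex
  assumes "norm z = 1" "\<And>t. norm (qint t z) \<le> C" "C \<ge> 0"
  shows "norm (G n z) \<le> (C + 1) ^ n"
proof (induction n)
  case 0
  then show ?case by simp
next
  case (Suc n)
  have "norm (G (Suc n) z) \<le> norm (qint (2 * Suc n) z) * norm (G n z) + 1"
    unfolding G_Suc
    using norm_triangle_ineq[of "qint (2 * Suc n) z * G n z" "(-1) ^ Suc n * z ^ (Suc n * n)"]
    by (simp add: norm_mult norm_power assms(1))
  also have "\<dots> \<le> C * (C + 1) ^ n + 1"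
    using Suc assms by (intro add_mono mult_mono) auto
  also have "\<dots> \<le> (C + 1) ^ Suc n"
    using one_le_power[of "C + 1" n] assms(3) by (simp add: algebra_simps)
  finally show ?case .
qed

text \<open>Hence, at every point \<open>z \<noteq> 1\<close> of the unit circle, \<open>G\<^sub>n(z)\<close> is negligible against
  \<open>G\<^sub>n(1)\<close>, because exponential growth loses against \<open>n!\<close>.\<close>

lemma G_negligible_on_unit_circle:
  fixes z :: complex
  assumes "z \<noteq> 1" "norm z = 1"
  shows "(\<lambda>n. G n z / G n 1) \<longlonglongrightarrow> 0"
proof -
  define C where "C = 2 / norm (z - 1)"
  have "C \<ge> 0" unfolding C_def by simp
  have "norm (qint t z) \<le> C" for t
    unfolding C_def by (rule qint_bound[OF assms])
  then have bound: "norm (G n z) \<le> (C + 1) ^ n" for n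
    using G_bound[OF assms(2) _ \<open>C \<ge> 0\<close>] by blast
  have "(\<lambda>n. inverse (fact n) * (C + 1) ^ n :: real) \<longlonglongrightarrow> 0"
    by (rule summable_LIMSEQ_zero[OF summable_exp])
  then have lim: "(\<lambda>n. (C + 1) ^ n / fact n :: real) \<longlonglongrightarrow> 0"
    by (simp add: divide_inverse mult.commute)
  show ?thesis
  proof (rule Lim_null_comparison[OF always_eventually lim], intro allI)
    fix n
    have pos: "G n (1::real) > 0"
      using order_less_le_trans[OF fact_gt_zero G_one_ge_fact] .
    have "norm (G n z / G n 1) = norm (G n z) / G n (1::real)"
      using G_of_real[of n 1] pos by (simp add: norm_divide)
    also have "\<dots> \<le> (C + 1) ^ n / fact n"
      using bound[of n] G_one_ge_fact[of n] pos \<open>C \<ge> 0\<close>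
      by (intro frac_le) auto
    finally show "norm (G n z / G n 1) \<le> (C + 1) ^ n / fact n" .
  qed
qed

theorem mainTheorem7:
  assumes gf: "\<And>(n::nat) (q::complex).
      (\<Sum>\<pi> \<in> B_derangements n. q ^ fmaj n \<pi>)
        = (\<Sum>k = 0..n. (-1) ^ k * q ^ (k * (k - 1)) * (\<Prod>j = k + 1..n. qint (2 * j) q))"
  shows "\<forall>m::nat. \<forall>r::nat. 2 \<le> m \<and> r < m \<longrightarrow>
     (\<lambda>n. real (card {\<pi> \<in> B_derangements n. fmaj n \<pi> mod m = r})
            / real (card (B_derangements n))) \<longlonglongrightarrow> 1 / real m"
proof (intro allI impI)
  fix m r :: nat
  assume "2 \<le> m \<and> r < m"
  have gen: "(\<Sum>\<pi> \<in> B_derangements n. q ^ fmaj n \<pi>) = G n q" for n and q :: complex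
    using gf unfolding fmaj_derangement_poly_def .
  have card: "of_nat (card (B_derangements n)) = (G n 1 :: complex)" for n
    using gen[where n=n and q=1] by simp
  have "complex_of_real (real (card (B_derangements n))) = of_real (G n 1)" for n
    using card[of n] G_of_real[of n 1] by simp
  then have "real (card (B_derangements n)) = G n 1" for n
    by (simp only: of_real_eq_iff)
  then have "real (card (B_derangements n)) > 0" for n
    using order_less_le_trans[OF fact_gt_zero G_one_ge_fact] by simp
  then have card_pos: "card (B_derangements n) > 0" for n
    by simp
  show "(\<lambda>n. real (card {\<pi> \<in> B_derangements n. fmaj n \<pi> mod m = r})
            / real (card (B_derangements n))) \<longlonglongrightarrow> 1 / real m"
  proof (rule balanced_if_roots_negligible)
    show "r < m" using \<open>2 \<le> m \<and> r < m\<close> by simp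
    show "finite (B_derangements n)" "B_derangements n \<noteq> {}" for n
      using card_pos[of n] card_gt_0_iff by auto
    fix j assume "1 \<le> j" "j < m"
    then have "unity_root m ^ j \<noteq> 1"
      using unity_root_power_eq_1_iff[of m j] by (auto dest: dvd_imp_le)
    then show "(\<lambda>n. (\<Sum>\<pi> \<in> B_derangements n. (unity_root m ^ j) ^ fmaj n \<pi>)
                     / of_nat (card (B_derangements n))) \<longlonglongrightarrow> 0"
      unfolding gen card using norm_unity_root_power by (rule G_negligible_on_unit_circle)
  qed
qed

end
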